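(* Let $\mathcal{N}$ be a finite-dimensional 2-step nilpotent Lie algebra over $\mathbb{R}$. Let $\mathcal{Z}$ be either $[\mathcal{N},\mathcal{N}]$ or the center $\mathfrak{z}(\mathcal{N})$, and let $\mathcal{V}$ be a subspace with $\mathcal{N}=\mathcal{V}\oplus\mathcal{Z}$. Let $G$ be the group of Lie ring automorphisms of $\mathcal{N}$, $H=\{f\in G: f(x)-x\in\mathcal{Z}\text{ for all }x\in\mathcal{N}\}$ and $K=\{f\in G: f(\mathcal{V})=\mathcal{V}\}$. Then $H$ is a normal subgroup of $G$, $K$ is a subgroup of $G$, and $G=HK$. If $\mathcal{Z}=[\mathcal{N},\mathcal{N}]$, then moreover $H\cap K=\{\mathrm{id}\}$, so $G\cong H\rtimes K$.
   Context: A Lie ring automorphism of a real Lie algebra is a bijective additive map preserving the Lie bracket (not necessarily $\mathbb{R}$-linear). *)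

theory Defs
  imports "HOL-Analysis.Analysis" "HOL-Algebra.Coset"
begin

text \<open>A real Lie algebra structure on a finite-dimensional real vector space
  (the carrier type is a euclidean_space, hence finite-dimensional), given by a bracket.\<close>
definition lie_algebra :: "('a::real_vector \<Rightarrow> 'a \<Rightarrow> 'a) \<Rightarrow> bool" where
  "lie_algebra br \<longleftrightarrow> bilinear br \<and> (\<forall>x. br x x = 0) \<and>
     (\<forall>x y z. br x (br y z) + br y (br z x) + br z (br x y) = 0)"

definition two_step_nilpotent :: "('a::real_vector \<Rightarrow> 'a \<Rightarrow> 'a) \<Rightarrow> bool" where
  "two_step_nilpotent br \<longleftrightarrow> (\<forall>x y z. br (br x y) z = 0) \<and> (\<exists>x y. br x y \<noteq> 0)"

definition derived_alg :: "('a::real_vector \<Rightarrow> 'a \<Rightarrow> 'a) \<Rightarrow> 'a set" where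
  "derived_alg br = span {br x y | x y. True}"

definition lie_center :: "('a::real_vector \<Rightarrow> 'a \<Rightarrow> 'a) \<Rightarrow> 'a set" where
  "lie_center br = {z. \<forall>x. br z x = 0}"

text \<open>Lie ring automorphism: bijective additive map preserving the bracket
  (not necessarily R-linear).\<close>
definition lie_ring_aut :: "('a::real_vector \<Rightarrow> 'a \<Rightarrow> 'a) \<Rightarrow> ('a \<Rightarrow> 'a) \<Rightarrow> bool" where
  "lie_ring_aut br f \<longleftrightarrow> bij f \<and> (\<forall>x y. f (x + y) = f x + f y) \<and>
     (\<forall>x y. f (br x y) = br (f x) (f y))"

definition aut_group :: "('a::real_vector \<Rightarrow> 'a \<Rightarrow> 'a) \<Rightarrow> ('a \<Rightarrow> 'a) monoid" where
  "aut_group br = \<lparr>carrier = {f. lie_ring_aut br f}, mult = (\<lambda>f g. f \<circ> g), one = id\<rparr>"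

end

(* Lie ring automorphisms map Z = [N,N] and Z = z(N) onto themselves, so H, the kernel of the
   action of G on N/Z, is normal, and K, a stabiliser, is a subgroup.  Given f in G, let k be
   f on Z and p o f on V, where p is the projection onto V along Z.  As Z is central and
   contains all brackets, correcting f by Z-valued terms does not change brackets, so k is an
   automorphism in K and f o k^-1 lies in H.  If Z = [N,N], an element of H /\ K fixes V
   pointwise (f v - v lies in V /\ Z) and every bracket ([f x, f y] = [x, y] because f x - x
   is central), hence fixes the span Z of the brackets, so it is the identity. *)

theory Submission
  imports Defs
begin

lemma lie_ring_aut_additive: "lie_ring_aut br f \<Longrightarrow> Modules.additive f"
  unfolding lie_ring_aut_def by (simp add: Modules.additive_def)

lemma lie_ring_aut_zero: "lie_ring_aut br f \<Longrightarrow> f 0 = 0"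
  using lie_ring_aut_additive Modules.additive.zero by blast

lemma lie_ring_aut_diff: "lie_ring_aut br f \<Longrightarrow> f (x - y) = f x - f y"
  using lie_ring_aut_additive Modules.additive.diff by blast

lemma lie_ring_aut_add: "lie_ring_aut br f \<Longrightarrow> f (x + y) = f x + f y"
  unfolding lie_ring_aut_def by blast

lemma lie_ring_aut_bracket: "lie_ring_aut br f \<Longrightarrow> f (br x y) = br (f x) (f y)"
  unfolding lie_ring_aut_def by blast

lemma lie_ring_aut_bij: "lie_ring_aut br f \<Longrightarrow> bij f"
  unfolding lie_ring_aut_def by blast

lemma lie_ring_aut_id: "lie_ring_aut br id"
  unfolding lie_ring_aut_def by auto

lemma lie_ring_aut_comp: "lie_ring_aut br f \<Longrightarrow> lie_ring_aut br g \<Longrightarrow> lie_ring_aut br (f \<circ> g)"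
  unfolding lie_ring_aut_def by (auto intro: bij_comp)

lemma lie_ring_aut_inv_into:
  assumes "lie_ring_aut br f"
  shows "lie_ring_aut br (inv_into UNIV f)"
proof -
  have f: "bij f"
    using assms by (rule lie_ring_aut_bij)
  have f_inv: "f (inv_into UNIV f x) = x" and inv_f: "inv_into UNIV f (f x) = x" for x
    using f by (simp_all add: bij_is_inj bij_is_surj surj_f_inv_f)
  have "inv_into UNIV f (x + y) = inv_into UNIV f x + inv_into UNIV f y" for x y
    by (metis f_inv inv_f lie_ring_aut_add[OF assms])
  moreover have "inv_into UNIV f (br x y) = br (inv_into UNIV f x) (inv_into UNIV f y)" for x y
    by (metis f_inv inv_f lie_ring_aut_bracket[OF assms])
  ultimately show ?thesis
    unfolding lie_ring_aut_def using bij_imp_bij_inv[OF f] by blast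
qed

lemma carrier_aut_group [simp]: "carrier (aut_group br) = {f. lie_ring_aut br f}"
  and mult_aut_group [simp]: "f \<otimes>\<^bsub>aut_group br\<^esub> g = f \<circ> g"
  and one_aut_group [simp]: "\<one>\<^bsub>aut_group br\<^esub> = id"
  by (simp_all add: aut_group_def)

lemma group_aut_group: "group (aut_group br)"
proof (rule groupI)
  fix f
  assume "f \<in> carrier (aut_group br)"
  then have f: "lie_ring_aut br f"
    by simp
  have "inv_into UNIV f \<circ> f = id"
    using lie_ring_aut_bij[OF f] by (simp add: bij_is_inj)
  then show "\<exists>g\<in>carrier (aut_group br). g \<otimes>\<^bsub>aut_group br\<^esub> f = \<one>\<^bsub>aut_group br\<^esub>"
    using lie_ring_aut_inv_into[OF f] by auto
qed (auto simp: lie_ring_aut_comp lie_ring_aut_id comp_assoc)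

lemma inv_aut_group:
  assumes "lie_ring_aut br f"
  shows "inv\<^bsub>aut_group br\<^esub> f = inv_into UNIV f"
proof -
  interpret group "aut_group br"
    by (rule group_aut_group)
  have "inv_into UNIV f \<circ> f = id"
    using lie_ring_aut_bij[OF assms] by (simp add: bij_is_inj)
  then show ?thesis
    using assms lie_ring_aut_inv_into[OF assms] by (intro inv_equality) auto
qed

locale complementary_subspaces =
  fixes V Z :: "'a::real_vector set"
  assumes subspace_V: "subspace V"
    and subspace_Z: "subspace Z"
    and inter_eq: "V \<inter> Z = {0}"
    and sum_eq: "{v + z | v z. v \<in> V \<and> z \<in> Z} = UNIV"
begin

definition proj :: "'a \<Rightarrow> 'a" where
  "proj x = (SOME v. v \<in> V \<and> x - v \<in> Z)"

lemma proj_in: "proj x \<in> V"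
  and diff_proj_in: "x - proj x \<in> Z"
proof -
  have "x \<in> {v + z | v z. v \<in> V \<and> z \<in> Z}"
    using sum_eq by simp
  then obtain v z where "x = v + z" "v \<in> V" "z \<in> Z"
    by blast
  then have "\<exists>v. v \<in> V \<and> x - v \<in> Z"
    by auto
  then have "proj x \<in> V \<and> x - proj x \<in> Z"
    unfolding proj_def by (rule someI_ex)
  then show "proj x \<in> V" "x - proj x \<in> Z"
    by auto
qed

lemma proj_unique:
  assumes "v \<in> V" "x - v \<in> Z"
  shows "proj x = v"
proof -
  have "proj x - v \<in> V"
    using subspace_diff[OF subspace_V proj_in assms(1)] .
  moreover have "proj x - v = (x - v) - (x - proj x)"
    by simp
  then have "proj x - v \<in> Z"
    using subspace_diff[OF subspace_Z assms(2) diff_proj_in[of x]] by simp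
  ultimately have "proj x - v = 0"
    using inter_eq by blast
  then show ?thesis
    by simp
qed

lemma proj_add_eq: "v \<in> V \<Longrightarrow> z \<in> Z \<Longrightarrow> proj (v + z) = v"
  by (rule proj_unique) simp_all

lemma proj_eq_self: "v \<in> V \<Longrightarrow> proj v = v"
  by (rule proj_unique) (simp_all add: subspace_0[OF subspace_Z])

lemma proj_eq_0: "z \<in> Z \<Longrightarrow> proj z = 0"
  by (rule proj_unique) (simp_all add: subspace_0[OF subspace_V])

lemma additive_proj: "Modules.additive proj"
proof (rule Modules.additive.intro)
  fix x y
  have "x + y - (proj x + proj y) = (x - proj x) + (y - proj y)"
    by simp
  also have "\<dots> \<in> Z"
    using subspace_add[OF subspace_Z diff_proj_in[of x] diff_proj_in[of y]] .
  finally show "proj (x + y) = proj x + proj y"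
    using proj_unique[OF subspace_add[OF subspace_V proj_in proj_in]] by blast
qed

text \<open>On V, the map proj \<circ> f is the map induced by f on the quotient by Z, transported
  to V along the isomorphism given by proj.\<close>
lemma bij_betw_proj_comp:
  assumes "Modules.additive f" "bij f" "f ` Z = Z"
  shows "bij_betw (proj \<circ> f) V V"
proof (rule bij_betw_imageI)
  interpret f: Modules.additive f
    by (rule assms(1))
  interpret proj: Modules.additive proj
    by (rule additive_proj)
  show "inj_on (proj \<circ> f) V"
  proof (rule inj_onI)
    fix v w
    assume v: "v \<in> V" and w: "w \<in> V" and "(proj \<circ> f) v = (proj \<circ> f) w"
    then have "proj (f (v - w)) = 0"
      by (simp add: f.diff proj.diff)
    then have "f (v - w) \<in> Z"
      using diff_proj_in[of "f (v - w)"] by simp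
    then have "v - w \<in> Z"
      using assms(3) inj_image_mem_iff[OF bij_is_inj[OF assms(2)]] by metis
    moreover have "v - w \<in> V"
      using subspace_diff[OF subspace_V v w] .
    ultimately have "v - w = 0"
      using inter_eq by blast
    then show "v = w"
      by simp
  qed
  show "(proj \<circ> f) ` V = V"
  proof
    show "(proj \<circ> f) ` V \<subseteq> V"
      using proj_in by auto
    show "V \<subseteq> (proj \<circ> f) ` V"
    proof
      fix v
      assume v: "v \<in> V"
      obtain w where w: "f w = v"
        using bij_is_surj[OF assms(2)] by (metis surjD)
      have "f (proj w) - v = - f (w - proj w)"
        using f.diff[of w "w - proj w"] w by simp
      moreover have "f (w - proj w) \<in> Z"
        using assms(3) diff_proj_in by blast
      ultimately have "proj (f (proj w)) = v"
        using proj_unique[OF v] subspace_neg[OF subspace_Z] by metis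
      then show "v \<in> (proj \<circ> f) ` V"
        using proj_in by (metis comp_apply image_eqI)
    qed
  qed
qed

lemma bij_if_bij_betw_summands:
  assumes "Modules.additive k" "bij_betw k V V" "bij_betw k Z Z"
  shows "bij k"
  unfolding bij_def
proof
  interpret k: Modules.additive k
    by (rule assms(1))
  have k_split: "k x = k (proj x) + k (x - proj x)" for x
    using k.add[of "proj x" "x - proj x"] by simp
  have k_V: "k (proj x) \<in> V" and k_Z: "k (x - proj x) \<in> Z" for x
    using bij_betw_apply[OF assms(2) proj_in] bij_betw_apply[OF assms(3) diff_proj_in] .
  have kernel: "x = 0" if "k x = 0" for x
  proof -
    have "k (proj x) = 0"
      using proj_add_eq[OF k_V[of x] k_Z[of x]] k_split[of x] that proj_eq_0[OF subspace_0[OF subspace_Z]]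
      by simp
    then have "proj x = 0"
      using inj_onD[OF bij_betw_imp_inj_on[OF assms(2)] _ proj_in subspace_0[OF subspace_V]] k.zero
      by simp
    moreover have "k (x - proj x) = 0"
      using \<open>k (proj x) = 0\<close> k_split[of x] that by simp
    then have "x - proj x = 0"
      using inj_onD[OF bij_betw_imp_inj_on[OF assms(3)] _ diff_proj_in subspace_0[OF subspace_Z]] k.zero
      by simp
    ultimately show ?thesis
      by simp
  qed
  show "inj k"
  proof (rule injI)
    fix x y
    assume "k x = k y"
    then have "k (x - y) = 0"
      by (simp add: k.diff)
    then have "x - y = 0"
      by (rule kernel)
    then show "x = y"
      by simp
  qed
  have "y \<in> range k" for y
  proof -
    obtain v z where "v \<in> V" "k v = proj y" "z \<in> Z" "k z = y - proj y"
      using bij_betw_imp_surj_on[OF assms(2)] bij_betw_imp_surj_on[OF assms(3)] proj_in diff_proj_in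
      by (metis imageE)
    then have "k (v + z) = y"
      by (simp add: k.add)
    then show ?thesis
      by (metis rangeI)
  qed
  then show "surj k"
    by blast
qed

lemma ex_bij_stabilizer_congruent:
  assumes "Modules.additive f" "bij f" "f ` Z = Z"
  shows "\<exists>k. Modules.additive k \<and> bij k \<and> k ` V = V \<and> (\<forall>z\<in>Z. k z = f z) \<and> (\<forall>x. k x - f x \<in> Z)"
proof -
  interpret f: Modules.additive f
    by (rule assms(1))
  interpret proj: Modules.additive proj
    by (rule additive_proj)
  define k where "k x = proj (f (proj x)) + f (x - proj x)" for x
  have k_V: "k v = proj (f v)" if "v \<in> V" for v
    using that by (simp add: k_def proj_eq_self f.zero)
  have k_Z: "k z = f z" if "z \<in> Z" for z
    using that by (simp add: k_def proj_eq_0 proj.zero f.zero)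
  have k_add: "k (x + y) = k x + k y" for x y
  proof -
    have split: "x + y - (proj x + proj y) = (x - proj x) + (y - proj y)"
      by simp
    show ?thesis
      unfolding k_def proj.add split f.add by (simp add: ac_simps)
  qed
  have k_congruent: "k x - f x \<in> Z" for x
  proof -
    have "k x - f x = - (f (proj x) - proj (f (proj x)))"
      using f.add[of "proj x" "x - proj x"] by (simp add: k_def)
    then show ?thesis
      using diff_proj_in subspace_neg[OF subspace_Z] by metis
  qed
  have "bij_betw k V V \<longleftrightarrow> bij_betw (proj \<circ> f) V V"
    by (rule bij_betw_cong) (simp add: k_V)
  then have k_V_bij: "bij_betw k V V"
    using bij_betw_proj_comp[OF assms] by simp
  have "bij_betw f Z Z"
    by (rule bij_betw_subset[OF assms(2) subset_UNIV assms(3)])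
  moreover have "bij_betw k Z Z \<longleftrightarrow> bij_betw f Z Z"
    by (rule bij_betw_cong) (simp add: k_Z)
  ultimately have k_Z_bij: "bij_betw k Z Z"
    by simp
  have "Modules.additive k"
    by (rule Modules.additive.intro) (rule k_add)
  moreover have "bij k"
    using \<open>Modules.additive k\<close> k_V_bij k_Z_bij by (rule bij_if_bij_betw_summands)
  moreover have "k ` V = V"
    using bij_betw_imp_surj_on[OF k_V_bij] .
  ultimately show ?thesis
    using k_Z k_congruent by blast
qed

end

lemma lie_algebra_antisym:
  assumes "lie_algebra br"
  shows "br x y = - br y x"
proof -
  have bil: "bilinear br" and alt: "\<And>x. br x x = 0"
    using assms unfolding lie_algebra_def by blast+
  have "0 = br (x + y) (x + y)"
    using alt by simp
  also have "\<dots> = br x x + br x y + (br y x + br y y)"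
    by (simp add: bilinear_ladd[OF bil] bilinear_radd[OF bil])
  finally show ?thesis
    using alt by (simp add: eq_neg_iff_add_eq_0)
qed

lemma subspace_lie_center: "bilinear br \<Longrightarrow> subspace (lie_center br)"
  unfolding subspace_def lie_center_def
  by (auto simp: bilinear_lzero bilinear_ladd bilinear_lmul)

lemma subspace_derived_alg: "subspace (derived_alg br)"
  unfolding derived_alg_def by (rule subspace_span)

lemma bracket_in_derived_alg: "br x y \<in> derived_alg br"
  unfolding derived_alg_def by (rule span_base) auto

lemma bracket_in_lie_center: "two_step_nilpotent br \<Longrightarrow> br x y \<in> lie_center br"
  unfolding two_step_nilpotent_def lie_center_def by blast

lemma derived_alg_subset_lie_center:
  assumes "bilinear br" "two_step_nilpotent br"
  shows "derived_alg br \<subseteq> lie_center br"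
  unfolding derived_alg_def
  using subspace_lie_center[OF assms(1)] bracket_in_lie_center[OF assms(2)]
  by (intro span_minimal) auto

lemma bracket_add_lie_center:
  assumes "lie_algebra br" "z \<in> lie_center br" "w \<in> lie_center br"
  shows "br (x + z) (y + w) = br x y"
proof -
  have bil: "bilinear br"
    using assms(1) unfolding lie_algebra_def by blast
  have "br x w = - br w x"
    using assms(1) by (rule lie_algebra_antisym)
  then show ?thesis
    using assms(2,3) unfolding lie_center_def
    by (simp add: bilinear_ladd[OF bil] bilinear_radd[OF bil])
qed

lemma lie_ring_aut_if_congruent_mod_lie_center:
  assumes "lie_algebra br" "lie_ring_aut br f" "Modules.additive k" "bij k"
    and k_bracket: "\<And>x y. k (br x y) = f (br x y)"
    and k_f: "\<And>x. k x - f x \<in> lie_center br"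
  shows "lie_ring_aut br k"
proof -
  have "k (br x y) = br (k x) (k y)" for x y
  proof -
    have "k (br x y) = br (f x) (f y)"
      using k_bracket lie_ring_aut_bracket[OF assms(2)] by simp
    also have "\<dots> = br (f x + (k x - f x)) (f y + (k y - f y))"
      using bracket_add_lie_center[OF assms(1) k_f[of x] k_f[of y], of "f x" "f y"] by (rule sym)
    finally show ?thesis
      by simp
  qed
  then show ?thesis
    using assms(3,4) unfolding lie_ring_aut_def Modules.additive_def by blast
qed

text \<open>Scalar multiples of brackets are brackets, so the derived algebra, although defined as a
  linear span, consists of finite sums of brackets; this makes it accessible to maps that
  are merely additive.\<close>
lemma derived_alg_induct [consumes 2, case_names zero bracket add]:
  assumes "bilinear br" "z \<in> derived_alg br"
    and "P 0" "\<And>x y. P (br x y)" "\<And>x y. P x \<Longrightarrow> P y \<Longrightarrow> P (x + y)"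
  shows "P z"
  using assms(2) unfolding derived_alg_def
proof (induction rule: span_induct_alt)
  case base
  show ?case by (rule assms(3))
next
  case (step c x y)
  then obtain a b where "x = br a b"
    by auto
  then have "c *\<^sub>R x = br (c *\<^sub>R a) b"
    using bilinear_lmul[OF assms(1)] by simp
  then show ?case
    using assms(4,5) step.IH by metis
qed

definition aut_invariant :: "('a::real_vector \<Rightarrow> 'a \<Rightarrow> 'a) \<Rightarrow> 'a set \<Rightarrow> bool" where
  "aut_invariant br Z \<longleftrightarrow> (\<forall>f. lie_ring_aut br f \<longrightarrow> f ` Z \<subseteq> Z)"

lemma aut_invariant_image_eq:
  assumes "aut_invariant br Z" "lie_ring_aut br f"
  shows "f ` Z = Z"
proof
  show "f ` Z \<subseteq> Z"
    using assms unfolding aut_invariant_def by blast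
  show "Z \<subseteq> f ` Z"
  proof
    fix z
    assume "z \<in> Z"
    then have "inv_into UNIV f z \<in> Z"
      using assms lie_ring_aut_inv_into unfolding aut_invariant_def by blast
    moreover have "z = f (inv_into UNIV f z)"
      using lie_ring_aut_bij[OF assms(2)] by (simp add: bij_is_surj surj_f_inv_f)
    ultimately show "z \<in> f ` Z"
      by blast
  qed
qed

lemma aut_invariant_lie_center: "aut_invariant br (lie_center br)"
  unfolding aut_invariant_def
proof (intro allI impI subsetI)
  fix f z
  assume f: "lie_ring_aut br f" and "z \<in> f ` lie_center br"
  then obtain c where c: "c \<in> lie_center br" and "z = f c"
    by blast
  have "br (f c) x = 0" for x
  proof -
    have "x = f (inv_into UNIV f x)"
      using lie_ring_aut_bij[OF f] by (simp add: bij_is_surj surj_f_inv_f)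
    then have "br (f c) x = f (br c (inv_into UNIV f x))"
      using lie_ring_aut_bracket[OF f] by metis
    then show ?thesis
      using c lie_ring_aut_zero[OF f] by (simp add: lie_center_def)
  qed
  then show "z \<in> lie_center br"
    using \<open>z = f c\<close> by (simp add: lie_center_def)
qed

lemma aut_invariant_derived_alg:
  assumes "bilinear br"
  shows "aut_invariant br (derived_alg br)"
  unfolding aut_invariant_def
proof (intro allI impI subsetI)
  fix f z
  assume f: "lie_ring_aut br f" and "z \<in> f ` derived_alg br"
  then obtain d where d: "d \<in> derived_alg br" and "z = f d"
    by blast
  from assms d have "f d \<in> derived_alg br"
  proof (induction rule: derived_alg_induct)
    case zero
    show ?case
      using lie_ring_aut_zero[OF f] by (simp add: derived_alg_def span_zero)
  next
    case (bracket x y)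
    show ?case
      using lie_ring_aut_bracket[OF f] bracket_in_derived_alg by metis
  next
    case (add x y)
    then show ?case
      using lie_ring_aut_add[OF f] by (simp add: derived_alg_def span_add)
  qed
  then show "z \<in> derived_alg br"
    using \<open>z = f d\<close> by simp
qed

definition aut_trivial_mod :: "('a::real_vector \<Rightarrow> 'a \<Rightarrow> 'a) \<Rightarrow> 'a set \<Rightarrow> ('a \<Rightarrow> 'a) set" where
  "aut_trivial_mod br Z = {f \<in> carrier (aut_group br). \<forall>x. f x - x \<in> Z}"

definition aut_stabilizer :: "('a::real_vector \<Rightarrow> 'a \<Rightarrow> 'a) \<Rightarrow> 'a set \<Rightarrow> ('a \<Rightarrow> 'a) set" where
  "aut_stabilizer br V = {f \<in> carrier (aut_group br). f ` V = V}"

lemma subgroup_aut_trivial_mod: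
  assumes "subspace Z"
  shows "subgroup (aut_trivial_mod br Z) (aut_group br)"
proof (rule group.subgroupI[OF group_aut_group])
  show "aut_trivial_mod br Z \<subseteq> carrier (aut_group br)"
    unfolding aut_trivial_mod_def by blast
  have "id \<in> aut_trivial_mod br Z"
    using lie_ring_aut_id subspace_0[OF assms] by (simp add: aut_trivial_mod_def)
  then show "aut_trivial_mod br Z \<noteq> {}"
    by blast
next
  fix f
  assume "f \<in> aut_trivial_mod br Z"
  then have f: "lie_ring_aut br f" and f_Z: "\<And>x. f x - x \<in> Z"
    by (auto simp: aut_trivial_mod_def)
  have "inv_into UNIV f x - x \<in> Z" for x
  proof -
    have "inv_into UNIV f x - x = - (f (inv_into UNIV f x) - inv_into UNIV f x)"
      using lie_ring_aut_bij[OF f] by (simp add: bij_is_surj surj_f_inv_f)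
    then show ?thesis
      using f_Z subspace_neg[OF assms] by metis
  qed
  then show "inv\<^bsub>aut_group br\<^esub> f \<in> aut_trivial_mod br Z"
    using f lie_ring_aut_inv_into[OF f] by (simp add: inv_aut_group aut_trivial_mod_def)
next
  fix f g
  assume "f \<in> aut_trivial_mod br Z" "g \<in> aut_trivial_mod br Z"
  then have fg: "lie_ring_aut br (f \<circ> g)" and f_Z: "f (g x) - g x \<in> Z" and g_Z: "g x - x \<in> Z" for x
    by (auto simp: aut_trivial_mod_def lie_ring_aut_comp)
  have "f (g x) - x \<in> Z" for x
    using subspace_add[OF assms f_Z[of x] g_Z[of x]] by simp
  then show "f \<otimes>\<^bsub>aut_group br\<^esub> g \<in> aut_trivial_mod br Z"
    using fg by (simp add: aut_trivial_mod_def)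
qed

lemma normal_aut_trivial_mod:
  assumes "subspace Z" "aut_invariant br Z"
  shows "aut_trivial_mod br Z \<lhd> aut_group br"
  unfolding group.normal_inv_iff[OF group_aut_group]
proof (intro conjI ballI subgroup_aut_trivial_mod[OF assms(1)])
  fix g h
  assume "g \<in> carrier (aut_group br)" "h \<in> aut_trivial_mod br Z"
  then have g: "lie_ring_aut br g" and h: "lie_ring_aut br h" and h_Z: "\<And>x. h x - x \<in> Z"
    by (auto simp: aut_trivial_mod_def)
  let ?g' = "inv_into UNIV g"
  have "g (h (?g' x)) - x \<in> Z" for x
  proof -
    have "x = g (?g' x)"
      using lie_ring_aut_bij[OF g] by (simp add: bij_is_surj surj_f_inv_f)
    then have "g (h (?g' x)) - x = g (h (?g' x) - ?g' x)"
      using lie_ring_aut_diff[OF g] by metis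
    then show ?thesis
      using h_Z aut_invariant_image_eq[OF assms(2) g] by blast
  qed
  moreover have "lie_ring_aut br (g \<circ> h \<circ> ?g')"
    using g h by (intro lie_ring_aut_comp lie_ring_aut_inv_into)
  ultimately show "g \<otimes>\<^bsub>aut_group br\<^esub> h \<otimes>\<^bsub>aut_group br\<^esub> inv\<^bsub>aut_group br\<^esub> g \<in> aut_trivial_mod br Z"
    using g by (simp add: inv_aut_group aut_trivial_mod_def)
qed

lemma subgroup_aut_stabilizer: "subgroup (aut_stabilizer br V) (aut_group br)"
proof (rule group.subgroupI[OF group_aut_group])
  show "aut_stabilizer br V \<subseteq> carrier (aut_group br)"
    unfolding aut_stabilizer_def by blast
  have "id \<in> aut_stabilizer br V"
    using lie_ring_aut_id by (simp add: aut_stabilizer_def)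
  then show "aut_stabilizer br V \<noteq> {}"
    by blast
next
  fix f
  assume "f \<in> aut_stabilizer br V"
  then have f: "lie_ring_aut br f" and "f ` V = V"
    by (auto simp: aut_stabilizer_def)
  then have "inv_into UNIV f ` V = V"
    using lie_ring_aut_bij[OF f] by (metis bij_is_inj image_inv_f_f)
  then show "inv\<^bsub>aut_group br\<^esub> f \<in> aut_stabilizer br V"
    using f lie_ring_aut_inv_into[OF f] by (simp add: inv_aut_group aut_stabilizer_def)
next
  fix f g
  assume "f \<in> aut_stabilizer br V" "g \<in> aut_stabilizer br V"
  moreover have "(f \<circ> g) ` V = f ` g ` V"
    by (simp add: image_comp)
  ultimately show "f \<otimes>\<^bsub>aut_group br\<^esub> g \<in> aut_stabilizer br V"
    by (simp add: aut_stabilizer_def lie_ring_aut_comp)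
qed

context complementary_subspaces
begin

lemma set_mult_aut_trivial_mod_stabilizer:
  assumes "lie_algebra br" "\<And>x y. br x y \<in> Z" "Z \<subseteq> lie_center br" "aut_invariant br Z"
  shows "aut_trivial_mod br Z <#>\<^bsub>aut_group br\<^esub> aut_stabilizer br V = carrier (aut_group br)"
proof
  show "aut_trivial_mod br Z <#>\<^bsub>aut_group br\<^esub> aut_stabilizer br V \<subseteq> carrier (aut_group br)"
    by (auto simp: set_mult_def aut_trivial_mod_def aut_stabilizer_def intro: lie_ring_aut_comp)
  show "carrier (aut_group br) \<subseteq> aut_trivial_mod br Z <#>\<^bsub>aut_group br\<^esub> aut_stabilizer br V"
  proof
    fix f
    assume "f \<in> carrier (aut_group br)"
    then have f: "lie_ring_aut br f"
      by simp
    obtain k where k_additive: "Modules.additive k" and k_bij: "bij k" and k_V: "k ` V = V"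
      and k_Z: "\<And>z. z \<in> Z \<Longrightarrow> k z = f z" and k_f: "\<And>x. k x - f x \<in> Z"
      using ex_bij_stabilizer_congruent[OF lie_ring_aut_additive[OF f] lie_ring_aut_bij[OF f]
          aut_invariant_image_eq[OF assms(4) f]]
      by blast
    have k: "lie_ring_aut br k"
      using assms(1) f k_additive k_bij k_Z[OF assms(2)] subsetD[OF assms(3) k_f]
      by (rule lie_ring_aut_if_congruent_mod_lie_center)
    have k_inv: "k (inv_into UNIV k x) = x" for x
      using k_bij by (simp add: bij_is_surj surj_f_inv_f)
    define h where "h = f \<circ> inv_into UNIV k"
    have "h x - x \<in> Z" for x
    proof -
      have "h x - x = - (k (inv_into UNIV k x) - f (inv_into UNIV k x))"
        using k_inv[of x] by (simp add: h_def)
      then show ?thesis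
        using k_f subspace_neg[OF subspace_Z] by metis
    qed
    then have "h \<in> aut_trivial_mod br Z"
      using \<open>f \<in> carrier (aut_group br)\<close> lie_ring_aut_comp lie_ring_aut_inv_into[OF k]
      by (simp add: h_def aut_trivial_mod_def)
    moreover have "k \<in> aut_stabilizer br V"
      using k k_V by (simp add: aut_stabilizer_def)
    moreover have "f = h \<otimes>\<^bsub>aut_group br\<^esub> k"
      using bij_is_inj[OF k_bij] by (simp add: h_def fun_eq_iff)
    ultimately show "f \<in> aut_trivial_mod br Z <#>\<^bsub>aut_group br\<^esub> aut_stabilizer br V"
      unfolding set_mult_def by blast
  qed
qed

lemma aut_trivial_mod_inter_stabilizer:
  assumes "lie_algebra br" "Z \<subseteq> lie_center br" "Z \<subseteq> derived_alg br"
  shows "aut_trivial_mod br Z \<inter> aut_stabilizer br V = {\<one>\<^bsub>aut_group br\<^esub>}"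
proof
  show "{\<one>\<^bsub>aut_group br\<^esub>} \<subseteq> aut_trivial_mod br Z \<inter> aut_stabilizer br V"
    using lie_ring_aut_id subspace_0[OF subspace_Z]
    by (simp add: aut_trivial_mod_def aut_stabilizer_def)
  show "aut_trivial_mod br Z \<inter> aut_stabilizer br V \<subseteq> {\<one>\<^bsub>aut_group br\<^esub>}"
  proof
    fix f
    assume "f \<in> aut_trivial_mod br Z \<inter> aut_stabilizer br V"
    then have f: "lie_ring_aut br f" and f_Z: "\<And>x. f x - x \<in> Z" and f_V: "f ` V = V"
      by (auto simp: aut_trivial_mod_def aut_stabilizer_def)
    have fixes_V: "f v = v" if "v \<in> V" for v
    proof -
      have "f v \<in> V"
        using f_V that by blast
      then have "f v - v \<in> V \<inter> Z"
        using subspace_diff[OF subspace_V _ that] f_Z[of v] by blast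
      then show ?thesis
        by (simp add: inter_eq)
    qed
    have fixes_bracket: "f (br x y) = br x y" for x y
    proof -
      have "f (br x y) = br (f x) (f y)"
        using lie_ring_aut_bracket[OF f] .
      also have "\<dots> = br x y"
        using bracket_add_lie_center[OF assms(1) subsetD[OF assms(2) f_Z[of x]]
            subsetD[OF assms(2) f_Z[of y]], of x y]
        by simp
      finally show ?thesis .
    qed
    have fixes_Z: "f z = z" if "z \<in> Z" for z
    proof -
      have "bilinear br" "z \<in> derived_alg br"
        using assms(1,3) that unfolding lie_algebra_def by blast+
      then show ?thesis
        by (induction rule: derived_alg_induct)
          (simp_all add: lie_ring_aut_zero[OF f] fixes_bracket lie_ring_aut_add[OF f])
    qed
    have "f x = x" for x
      using lie_ring_aut_add[OF f, of "proj x" "x - proj x"] fixes_V[OF proj_in] fixes_Z[OF diff_proj_in]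
      by simp
    then show "f \<in> {\<one>\<^bsub>aut_group br\<^esub>}"
      by auto
  qed
qed

end

theorem proposition7p1:
  fixes br :: "'a::euclidean_space \<Rightarrow> 'a \<Rightarrow> 'a"
    and Z V :: "'a set"
    and G :: "('a \<Rightarrow> 'a) monoid"
    and H K :: "('a \<Rightarrow> 'a) set"
  assumes "lie_algebra br"
    and "two_step_nilpotent br"
    and "Z = derived_alg br \<or> Z = lie_center br"
    and "subspace V"
    and "V \<inter> Z = {0}"
    and "{v + z | v z. v \<in> V \<and> z \<in> Z} = UNIV"
    and "G = aut_group br"
    and "H = {f \<in> carrier G. \<forall>x. f x - x \<in> Z}"
    and "K = {f \<in> carrier G. f ` V = V}"
  shows "H \<lhd> G \<and> subgroup K G \<and> H <#>\<^bsub>G\<^esub> K = carrier G \<and>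
         (Z = derived_alg br \<longrightarrow> H \<inter> K = {\<one>\<^bsub>G\<^esub>})"
proof -
  have bil: "bilinear br"
    using assms(1) unfolding lie_algebra_def by blast
  have "subspace Z \<and> (\<forall>x y. br x y \<in> Z) \<and> Z \<subseteq> lie_center br \<and> aut_invariant br Z"
    using assms(3)
    by (elim disjE)
      (simp_all add: subspace_derived_alg bracket_in_derived_alg
        derived_alg_subset_lie_center[OF bil assms(2)] aut_invariant_derived_alg[OF bil]
        subspace_lie_center[OF bil] bracket_in_lie_center[OF assms(2)] aut_invariant_lie_center)
  then have Z_subspace: "subspace Z" and Z_brackets: "\<And>x y. br x y \<in> Z"
    and Z_central: "Z \<subseteq> lie_center br" and Z_invariant: "aut_invariant br Z"
    by blast+
  interpret complementary_subspaces V Z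
    using assms(4-6) Z_subspace by unfold_locales
  have H: "H = aut_trivial_mod br Z" and K: "K = aut_stabilizer br V"
    using assms(7-9) by (simp_all add: aut_trivial_mod_def aut_stabilizer_def)
  show ?thesis
    unfolding H K assms(7)
  proof (intro conjI impI)
    show "aut_trivial_mod br Z \<lhd> aut_group br"
      using Z_subspace Z_invariant by (rule normal_aut_trivial_mod)
    show "subgroup (aut_stabilizer br V) (aut_group br)"
      by (rule subgroup_aut_stabilizer)
    show "aut_trivial_mod br Z <#>\<^bsub>aut_group br\<^esub> aut_stabilizer br V = carrier (aut_group br)"
      using assms(1) Z_brackets Z_central Z_invariant by (rule set_mult_aut_trivial_mod_stabilizer)
    assume "Z = derived_alg br"
    then show "aut_trivial_mod br Z \<inter> aut_stabilizer br V = {\<one>\<^bsub>aut_group br\<^esub>}"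
      using assms(1) Z_central by (intro aut_trivial_mod_inter_stabilizer) simp_all
  qed
qed

end
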